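(* Let $B = M \cup \{\omega_1,\ldots,\omega_p\}$ with $p\ge1$ and $\omega_i\in P_2\setminus M$, and let $r(B)=\max\{d(\omega_1),\ldots,d(\omega_p)\}$. Then for every finite system $F$ of Boolean functions of variables $x_1,\ldots,x_n$, $$d(F)\le (2r(B)+1)\left(2^{I_B(F)}-1\right).$$
   Context: $P_2$ denotes the set of all Boolean functions and $M\subset P_2$ the set of all monotone Boolean functions (including the constants). Tuples in $\{0,1\}^n$ are compared componentwise. An increasing chain is a sequence of pairwise distinct tuples $\tilde\alpha_1,\ldots,\tilde\alpha_r\in\{0,1\}^n$ with $\tilde\alpha_i\le\tilde\alpha_{i+1}$ for all $i$. For a Boolean function $f$, a pair $(\tilde\alpha,\tilde\beta)$ with $\tilde\alpha\le\tilde\beta$ and $f(\tilde\alpha)>f(\tilde\beta)$ is a jump of $f$; a pair is a jump of a system $F$ if it is a jump of some $f\in F$. For a chain $C=(\tilde\alpha_1,\ldots,\tilde\alpha_r)$, $d_C(F)$ is the number of $i$ with $(\tilde\alpha_i,\tilde\alpha_{i+1})$ a jump of $F$, and $d(F)=\max_C d_C(F)$ over all chains; $d(f)=d(\{f\})$. A circuit over $B$ is a Boolean circuit with inputs $x_1,\ldots,x_n$ whose gates compute functions of $B$; gates computing functions in $M$ have weight $0$ and gates computing some $\omega_i$ have weight $1$. $I_B(F)$ is the minimum total weight of a circuit over $B$ realizing all functions of $F$. *)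

theory Defs
  imports Main
begin

text \<open>Boolean tuples in {0,1}^n are bool lists of length n; a Boolean function of
n variables is a map bool list => bool considered on lists of length n.\<close>

definition tle :: "bool list \<Rightarrow> bool list \<Rightarrow> bool" where
  "tle a b \<longleftrightarrow> list_all2 (\<le>) a b"

definition monotone_fn :: "nat \<Rightarrow> (bool list \<Rightarrow> bool) \<Rightarrow> bool" where
  "monotone_fn k f \<longleftrightarrow>
     (\<forall>a b. length a = k \<longrightarrow> length b = k \<longrightarrow> tle a b \<longrightarrow> f a \<le> f b)"

definition is_jump :: "(bool list \<Rightarrow> bool) \<Rightarrow> bool list \<Rightarrow> bool list \<Rightarrow> bool" where
  "is_jump f a b \<longleftrightarrow> tle a b \<and> f a > f b"

definition sys_jump :: "(bool list \<Rightarrow> bool) set \<Rightarrow> bool list \<Rightarrow> bool list \<Rightarrow> bool" where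
  "sys_jump F a b \<longleftrightarrow> (\<exists>f\<in>F. is_jump f a b)"

definition is_chain :: "nat \<Rightarrow> bool list list \<Rightarrow> bool" where
  "is_chain n C \<longleftrightarrow> distinct C \<and> (\<forall>a\<in>set C. length a = n) \<and>
     (\<forall>i. Suc i < length C \<longrightarrow> tle (C ! i) (C ! Suc i))"

definition dC :: "(bool list \<Rightarrow> bool) set \<Rightarrow> bool list list \<Rightarrow> nat" where
  "dC F C = card {i. Suc i < length C \<and> sys_jump F (C ! i) (C ! Suc i)}"

definition dsys :: "nat \<Rightarrow> (bool list \<Rightarrow> bool) set \<Rightarrow> nat" where
  "dsys n F = Max (dC F ` {C. is_chain n C})"

definition dfun :: "nat \<Rightarrow> (bool list \<Rightarrow> bool) \<Rightarrow> nat" where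
  "dfun n f = dsys n {f}"

text \<open>The basis B = M \<union> {omega_1,...,omega_p} is given by the list ws of the
omega_i together with their arities.\<close>

definition in_basis :: "(nat \<times> (bool list \<Rightarrow> bool)) list \<Rightarrow> nat \<Rightarrow> (bool list \<Rightarrow> bool) \<Rightarrow> bool" where
  "in_basis ws k g \<longleftrightarrow> monotone_fn k g \<or>
     (\<exists>(k', w)\<in>set ws. k' = k \<and> (\<forall>xs. length xs = k \<longrightarrow> g xs = w xs))"

definition rB :: "(nat \<times> (bool list \<Rightarrow> bool)) list \<Rightarrow> nat" where
  "rB ws = Max ((\<lambda>(k, w). dfun k w) ` set ws)"

text \<open>A circuit is a list of gates; gate j is a pair (g, args) where g is the
function computed by the gate (of arity length args) and args are the node
indices of its inputs.  Nodes 0..n-1 are the inputs x_1..x_n, node n+j is gate j.\<close>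

type_synonym gate = "(bool list \<Rightarrow> bool) \<times> nat list"

definition gate_step :: "bool list \<Rightarrow> gate \<Rightarrow> bool list" where
  "gate_step vs gt = vs @ [fst gt (map (\<lambda>j. vs ! j) (snd gt))]"

definition node_vals :: "gate list \<Rightarrow> bool list \<Rightarrow> bool list" where
  "node_vals C x = foldl gate_step x C"

definition circuit_over :: "nat \<Rightarrow> (nat \<times> (bool list \<Rightarrow> bool)) list \<Rightarrow> gate list \<Rightarrow> bool" where
  "circuit_over n ws C \<longleftrightarrow> (\<forall>j < length C.
     (\<forall>a\<in>set (snd (C ! j)). a < n + j) \<and> in_basis ws (length (snd (C ! j))) (fst (C ! j)))"

definition gate_weight :: "gate \<Rightarrow> nat" where
  "gate_weight gt = (if monotone_fn (length (snd gt)) (fst gt) then 0 else 1)"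

definition circuit_weight :: "gate list \<Rightarrow> nat" where
  "circuit_weight C = sum_list (map gate_weight C)"

definition realizes :: "nat \<Rightarrow> gate list \<Rightarrow> (bool list \<Rightarrow> bool) set \<Rightarrow> bool" where
  "realizes n C F \<longleftrightarrow> (\<forall>f\<in>F. \<exists>v < n + length C.
     \<forall>x. length x = n \<longrightarrow> node_vals C x ! v = f x)"

definition I_B :: "nat \<Rightarrow> (nat \<times> (bool list \<Rightarrow> bool)) list \<Rightarrow> (bool list \<Rightarrow> bool) set \<Rightarrow> nat" where
  "I_B n ws F = (LEAST w. \<exists>C. circuit_over n ws C \<and> realizes n C F \<and> circuit_weight C = w)"

end

theory Submission
  imports Defs
begin

text \<open>Cut a circuit realizing F at its first non-monotone gate, which computes some
\<open>\<omega>\<^sub>i\<close>. All gates below it are monotone, so along a chain its argument tuples increase;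
hence its value falls at most \<open>r(B)\<close> times and changes at most \<open>2 r(B) + 1\<close> times.
Between two changes the gate is constant, and replacing it by either constant gives a
circuit of weight one less. Every jump of the original circuit along the chain is a change
of the cut gate or a jump of one of the two replacements, so the number \<open>J(w)\<close> of jumps
of a weight-\<open>w\<close> circuit satisfies \<open>J(w) \<le> 2 r(B) + 1 + 2 J(w - 1)\<close>, and \<open>J(0) = 0\<close>
because monotone circuits have no jumps.\<close>

lemma tle_refl: "tle a a"
  unfolding tle_def by (simp add: list_all2_refl)

lemma tle_trans: "tle a b \<Longrightarrow> tle b c \<Longrightarrow> tle a c"
  unfolding tle_def by (rule list_all2_trans[of "(\<le>)" "(\<le>)" "(\<le>)"]) auto

lemma tle_antisym: "tle a b \<Longrightarrow> tle b a \<Longrightarrow> a = b"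
  unfolding tle_def by (rule list_all2_antisym[of "(\<le>)" "(\<le>)"]) auto

lemma tle_length: "tle a b \<Longrightarrow> length a = length b"
  unfolding tle_def by (rule list_all2_lengthD)

lemma tle_nth: "tle a b \<Longrightarrow> i < length a \<Longrightarrow> a ! i \<le> b ! i"
  unfolding tle_def by (rule list_all2_nthD)

lemma foldl_gate_step_extends: "\<exists>ys. foldl gate_step vs D = vs @ ys \<and> length ys = length D"
proof (induction D arbitrary: vs)
  case Nil
  then show ?case by simp
next
  case (Cons g D)
  then obtain ys where "foldl gate_step (gate_step vs g) D = gate_step vs g @ ys" "length ys = length D"
    by blast
  then show ?case
    by (intro exI[of _ "fst g (map ((!) vs) (snd g)) # ys"]) (simp add: gate_step_def[of vs g])
qed

lemma length_node_vals: "length (node_vals C x) = length x + length C"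
  using foldl_gate_step_extends[of x C] unfolding node_vals_def by auto

lemma node_vals_take:
  assumes "k \<le> length C" "v < length x + k"
  shows "node_vals C x ! v = node_vals (take k C) x ! v"
proof -
  have "node_vals C x = foldl gate_step (node_vals (take k C) x) (drop k C)"
    unfolding node_vals_def by (metis append_take_drop_id foldl_append)
  then obtain ys where "node_vals C x = node_vals (take k C) x @ ys"
    using foldl_gate_step_extends by metis
  then show ?thesis using assms by (simp add: nth_append length_node_vals)
qed

lemma node_vals_input: "v < length x \<Longrightarrow> node_vals C x ! v = x ! v"
  using node_vals_take[of 0 C v x] by (simp add: node_vals_def)

lemma node_vals_take_Suc:
  "j < length C \<Longrightarrow> node_vals (take (Suc j) C) x = gate_step (node_vals (take j C) x) (C ! j)"
  by (simp add: take_Suc_conv_app_nth node_vals_def)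

lemma node_vals_gate_take:
  assumes "j < length C"
  shows "node_vals C x ! (length x + j) = fst (C ! j) (map (\<lambda>a. node_vals (take j C) x ! a) (snd (C ! j)))"
  using assms node_vals_take[of "Suc j" C "length x + j" x]
  by (simp add: node_vals_take_Suc gate_step_def nth_append length_node_vals)

lemma node_vals_gate:
  assumes "j < length C" "\<forall>a\<in>set (snd (C ! j)). a < length x + j"
  shows "node_vals C x ! (length x + j) = fst (C ! j) (map (\<lambda>a. node_vals C x ! a) (snd (C ! j)))"
proof -
  have args: "map (\<lambda>a. node_vals (take j C) x ! a) (snd (C ! j)) = map (\<lambda>a. node_vals C x ! a) (snd (C ! j))"
    using assms by (auto intro!: node_vals_take[symmetric])
  show ?thesis unfolding node_vals_gate_take[OF assms(1)] args ..
qed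

definition const_gate :: "bool \<Rightarrow> gate" where
  "const_gate c = (\<lambda>_. c, [])"

lemma node_vals_replace_by_value:
  assumes "j < length C" "node_vals C x ! (length x + j) = c"
  shows "node_vals (C[j := const_gate c]) x = node_vals C x"
proof -
  have split: "node_vals (C[j := g]) x = foldl gate_step (gate_step (node_vals (take j C) x) g) (drop (Suc j) C)" for g
    using assms(1) by (simp add: upd_conv_take_nth_drop node_vals_def)
  have step: "gate_step (node_vals (take j C) x) (C ! j) = gate_step (node_vals (take j C) x) (const_gate c)"
    using assms node_vals_gate_take[OF assms(1)] by (simp add: gate_step_def const_gate_def)
  have "node_vals C x = node_vals (C[j := C ! j]) x" by simp
  also have "\<dots> = node_vals (C[j := const_gate c]) x" unfolding split step ..
  finally show ?thesis by simp
qed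

definition monotone_gate :: "gate \<Rightarrow> bool" where
  "monotone_gate gt \<longleftrightarrow> monotone_fn (length (snd gt)) (fst gt)"

lemma node_vals_mono:
  assumes "\<forall>j'<j. monotone_gate (C ! j') \<and> (\<forall>a\<in>set (snd (C ! j')). a < n + j')"
    and "j \<le> length C" "length x = n" "length y = n" "tle x y" "v < n + j"
  shows "node_vals C x ! v \<le> node_vals C y ! v"
  using assms(6)
proof (induction v rule: less_induct)
  case (less v)
  show ?case
  proof (cases "v < n")
    case True
    then show ?thesis using assms(3-5) tle_nth[of x y v] by (simp add: node_vals_input)
  next
    case False
    then obtain j' where v: "v = n + j'" and j': "j' < j"
      using less.prems by (metis add_less_imp_less_left le_Suc_ex not_less)
    have mono: "monotone_fn (length (snd (C ! j'))) (fst (C ! j'))"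
      and args: "\<forall>a\<in>set (snd (C ! j')). a < n + j'"
      using assms(1) j' by (auto simp: monotone_gate_def)
    have "tle (map (\<lambda>a. node_vals C x ! a) (snd (C ! j'))) (map (\<lambda>a. node_vals C y ! a) (snd (C ! j')))"
      unfolding tle_def list_all2_map1 list_all2_map2
      using args less.IH v j' by (auto intro!: list_all2_all_nthI)
    then show ?thesis
      using node_vals_gate[of j' C x] node_vals_gate[of j' C y] mono args j' v assms(2-4)
      unfolding monotone_fn_def by (simp; metis length_map)
  qed
qed

lemma card_less_Suc_conj:
  "card {i. i < Suc m \<and> P i} = card {i. i < m \<and> P i} + (if P m then 1 else 0)"
proof -
  have "{i. i < Suc m \<and> P i} = {i. i < m \<and> P i} \<union> (if P m then {m} else {})"
    using less_Suc_eq by auto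
  then show ?thesis by auto
qed

lemma card_rises_eq_card_falls:
  "card {i. i < m \<and> \<not> g i \<and> g (Suc i)} + (if g 0 then 1 else 0)
   = card {i. i < m \<and> g i \<and> \<not> g (Suc i)} + (if g m then 1 else 0)"
  by (induction m) (auto simp: card_less_Suc_conj)

lemma card_changes_le_falls:
  "card {i. i < m \<and> g i \<noteq> g (Suc i)} \<le> 2 * card {i. i < m \<and> g i \<and> \<not> g (Suc i)} + 1"
proof -
  have "{i. i < m \<and> g i \<noteq> g (Suc i)} = {i. i < m \<and> g i \<and> \<not> g (Suc i)} \<union> {i. i < m \<and> \<not> g i \<and> g (Suc i)}"
    by auto
  then have "card {i. i < m \<and> g i \<noteq> g (Suc i)}
      \<le> card {i. i < m \<and> g i \<and> \<not> g (Suc i)} + card {i. i < m \<and> \<not> g i \<and> g (Suc i)}"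
    by (simp add: card_Un_le)
  moreover have "card {i. i < m \<and> \<not> g i \<and> g (Suc i)} \<le> card {i. i < m \<and> g i \<and> \<not> g (Suc i)} + 1"
    using card_rises_eq_card_falls[of m g] by (auto split: if_splits)
  ultimately show ?thesis by simp
qed

lemma finite_chains: "finite {C. is_chain k C}"
proof -
  let ?A = "{a :: bool list. length a = k}"
  have fin: "finite ?A" using finite_lists_length_eq[of "UNIV :: bool set" k] by simp
  have "{C. is_chain k C} \<subseteq> {xs. set xs \<subseteq> ?A \<and> length xs \<le> card ?A}"
  proof
    fix C assume "C \<in> {C. is_chain k C}"
    then have "distinct C" and sub: "set C \<subseteq> ?A" unfolding is_chain_def by auto
    then have "length C \<le> card ?A" using fin by (metis card_mono distinct_card)
    then show "C \<in> {xs. set xs \<subseteq> ?A \<and> length xs \<le> card ?A}" using sub by simp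
  qed
  then show ?thesis using finite_lists_length_le[OF fin] by (rule finite_subset)
qed

lemma dC_le_dsys: "is_chain k C \<Longrightarrow> dC F C \<le> dsys k F"
  unfolding dsys_def using finite_chains by (intro Max_ge) auto

lemma dsys_le:
  assumes "\<And>C. is_chain k C \<Longrightarrow> dC F C \<le> b"
  shows "dsys k F \<le> b"
proof -
  have "is_chain k []" by (simp add: is_chain_def)
  then show ?thesis unfolding dsys_def using finite_chains assms by (intro Max.boundedI) auto
qed

lemma chain_nth_mono: "is_chain k C \<Longrightarrow> i \<le> j \<Longrightarrow> j < length C \<Longrightarrow> tle (C ! i) (C ! j)"
proof (induction j)
  case 0
  then show ?case by (simp add: tle_refl)
next
  case (Suc j)
  then show ?case
    by (cases "i = Suc j") (auto simp: tle_refl is_chain_def intro: tle_trans)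
qed

lemma is_chain_snoc:
  assumes C: "is_chain k C" "C \<noteq> []" and b: "tle (last C) b" "b \<noteq> last C" "length b = k"
  shows "is_chain k (C @ [b])"
proof -
  have "b \<notin> set C"
  proof
    assume "b \<in> set C"
    then obtain i where i: "i < length C" "C ! i = b" by (metis in_set_conv_nth)
    then have "tle b (last C)"
      using chain_nth_mono[OF C(1), of i "length C - 1"] C(2) by (simp add: last_conv_nth)
    then show False using b tle_antisym by blast
  qed
  moreover have "tle ((C @ [b]) ! i) ((C @ [b]) ! Suc i)" if "Suc i < Suc (length C)" for i
  proof (cases "Suc i < length C")
    case True
    then show ?thesis using C(1) by (simp add: is_chain_def nth_append)
  next
    case False
    then have "i = length C - 1" using that by simp
    then show ?thesis using C(2) b(1) by (simp add: nth_append last_conv_nth)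
  qed
  ultimately show ?thesis using C b by (simp add: is_chain_def)
qed

lemma dC_snoc:
  assumes "C \<noteq> []"
  shows "dC F (C @ [b]) = dC F C + (if sys_jump F (last C) b then 1 else 0)"
proof -
  obtain L where L: "length C = Suc L" using assms by (cases C) auto
  have "dC F (C @ [b]) = card {i. i < Suc L \<and> sys_jump F ((C @ [b]) ! i) ((C @ [b]) ! Suc i)}"
    unfolding dC_def using L by simp
  also have "\<dots> = card {i. i < L \<and> sys_jump F ((C @ [b]) ! i) ((C @ [b]) ! Suc i)}
      + (if sys_jump F ((C @ [b]) ! L) ((C @ [b]) ! Suc L) then 1 else 0)"
    by (rule card_less_Suc_conj)
  also have "{i. i < L \<and> sys_jump F ((C @ [b]) ! i) ((C @ [b]) ! Suc i)}
      = {i. Suc i < length C \<and> sys_jump F (C ! i) (C ! Suc i)}"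
    using L by (auto simp: nth_append)
  finally show ?thesis using L assms by (simp add: dC_def nth_append last_conv_nth)
qed

text \<open>Repeated entries are dropped; no jump is lost, as equal tuples never form a jump.\<close>
lemma chain_of_increasing_seq:
  assumes "\<And>i. Suc i < R \<Longrightarrow> tle (h i) (h (Suc i))" "\<And>i. i < R \<Longrightarrow> length (h i) = k"
  shows "\<exists>C. is_chain k C \<and> (0 < R \<longrightarrow> C \<noteq> [] \<and> last C = h (R - 1))
           \<and> card {i. Suc i < R \<and> sys_jump F (h i) (h (Suc i))} \<le> dC F C"
  using assms
proof (induction R)
  case 0
  show ?case by (intro exI[of _ "[]"]) (simp add: is_chain_def)
next
  case (Suc R)
  show ?case
  proof (cases "R = 0")
    case True
    then show ?thesis using Suc.prems by (intro exI[of _ "[h 0]"]) (simp add: is_chain_def dC_def)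
  next
    case False
    then obtain m where R: "R = Suc m" by (cases R) auto
    obtain C where C: "is_chain k C" "C \<noteq> []" "last C = h m"
      and cnt: "card {i. Suc i < R \<and> sys_jump F (h i) (h (Suc i))} \<le> dC F C"
      using Suc R by auto
    have count: "card {i. Suc i < Suc R \<and> sys_jump F (h i) (h (Suc i))}
        = card {i. Suc i < R \<and> sys_jump F (h i) (h (Suc i))} + (if sys_jump F (h m) (h R) then 1 else 0)"
      using card_less_Suc_conj[of m "\<lambda>i. sys_jump F (h i) (h (Suc i))"] R by simp
    show ?thesis
    proof (cases "h R = h m")
      case True
      then have "\<not> sys_jump F (h m) (h R)" by (simp add: sys_jump_def is_jump_def)
      then show ?thesis using C cnt count True by auto
    next
      case False
      have "is_chain k (C @ [h R])"
        using C Suc.prems R False by (intro is_chain_snoc) auto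
      then show ?thesis using C cnt count dC_snoc[of C F "h R"]
        by (intro exI[of _ "C @ [h R]"]) auto
    qed
  qed
qed

lemma gate_weight_eq: "gate_weight gt = (if monotone_gate gt then 0 else 1)"
  by (simp add: gate_weight_def monotone_gate_def)

lemma monotone_fn_const: "monotone_fn k (\<lambda>_. c)"
  by (simp add: monotone_fn_def)

lemma monotone_gate_const_gate: "monotone_gate (const_gate c)"
  by (simp add: monotone_gate_def const_gate_def monotone_fn_const)

lemma in_basis_monotone: "monotone_fn k g \<Longrightarrow> in_basis ws k g"
  by (simp add: in_basis_def)

lemma in_basis_listed: "(k, w) \<in> set ws \<Longrightarrow> in_basis ws k w"
  unfolding in_basis_def by (intro disjI2 bexI) auto

lemma circuit_over_update_const_gate:
  assumes "circuit_over n ws C"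
  shows "circuit_over n ws (C[j := const_gate c])"
  unfolding circuit_over_def
proof (intro allI impI)
  fix i assume "i < length (C[j := const_gate c])"
  then show "(\<forall>a\<in>set (snd (C[j := const_gate c] ! i)). a < n + i)
    \<and> in_basis ws (length (snd (C[j := const_gate c] ! i))) (fst (C[j := const_gate c] ! i))"
    using assms unfolding circuit_over_def
    by (cases "i = j") (simp_all add: const_gate_def in_basis_monotone monotone_fn_const)
qed

lemma circuit_weight_update:
  assumes "j < length C"
  shows "circuit_weight (C[j := g]) + gate_weight (C ! j) = circuit_weight C + gate_weight g"
proof -
  have split: "circuit_weight (take j C @ g' # drop (Suc j) C)
      = circuit_weight (take j C) + gate_weight g' + circuit_weight (drop (Suc j) C)" for g'
    by (simp add: circuit_weight_def)
  have "circuit_weight C = circuit_weight (take j C @ C ! j # drop (Suc j) C)"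
    using id_take_nth_drop[OF assms] by (rule arg_cong)
  then show ?thesis unfolding upd_conv_take_nth_drop[OF assms] split by simp
qed

lemma rB_ge: "(k, w) \<in> set ws \<Longrightarrow> dfun k w \<le> rB ws"
  unfolding rB_def by (rule Max_ge) force+

definition circuit_jumps :: "nat \<Rightarrow> bool list list \<Rightarrow> gate list \<Rightarrow> nat set" where
  "circuit_jumps n Ch C = {i. Suc i < length Ch \<and>
     (\<exists>v < n + length C. node_vals C (Ch ! i) ! v \<and> \<not> node_vals C (Ch ! Suc i) ! v)}"

lemma finite_circuit_jumps: "finite (circuit_jumps n Ch C)"
  unfolding circuit_jumps_def by (rule finite_subset[of _ "{..<length Ch}"]) auto

lemma circuit_jumps_monotone:
  assumes "circuit_over n ws C" "\<forall>j<length C. monotone_gate (C ! j)" "is_chain n Ch"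
  shows "circuit_jumps n Ch C = {}"
proof -
  have gates: "\<forall>j<length C. monotone_gate (C ! j) \<and> (\<forall>a\<in>set (snd (C ! j)). a < n + j)"
    using assms(1,2) unfolding circuit_over_def by auto
  have "node_vals C (Ch ! i) ! v \<le> node_vals C (Ch ! Suc i) ! v"
    if "Suc i < length Ch" "v < n + length C" for i v
    using node_vals_mono[OF gates, of "Ch ! i" "Ch ! Suc i" v] assms(3) that
    by (simp add: is_chain_def)
  then show ?thesis unfolding circuit_jumps_def by fastforce
qed

lemma falls_first_nonmonotone_gate:
  assumes co: "circuit_over n ws C" and Ch: "is_chain n Ch" and j: "j < length C"
    and below: "\<forall>j'<j. monotone_gate (C ! j')" and nm: "\<not> monotone_gate (C ! j)"
  shows "card {i. Suc i < length Ch \<and> node_vals C (Ch ! i) ! (n + j) \<and> \<not> node_vals C (Ch ! Suc i) ! (n + j)}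
    \<le> rB ws"
proof -
  define args where "args = snd (C ! j)"
  define h where "h i = map (\<lambda>a. node_vals C (Ch ! i) ! a) args" for i
  obtain k w where kw: "(k, w) \<in> set ws" "k = length args" "\<forall>xs. length xs = k \<longrightarrow> fst (C ! j) xs = w xs"
    using co j nm unfolding circuit_over_def in_basis_def args_def monotone_gate_def by fastforce
  have args_lt: "\<forall>a\<in>set args. a < n + j"
    using co j unfolding circuit_over_def args_def by auto
  have gates: "\<forall>j'<j. monotone_gate (C ! j') \<and> (\<forall>a\<in>set (snd (C ! j')). a < n + j')"
    using below co j unfolding circuit_over_def by auto
  have len: "length (Ch ! i) = n" if "i < length Ch" for i
    using Ch that by (simp add: is_chain_def)
  have gate_h: "node_vals C (Ch ! i) ! (n + j) = w (h i)" if "i < length Ch" for i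
    using node_vals_gate[of j C "Ch ! i"] j args_lt len[OF that] kw unfolding h_def args_def by simp
  have h_incr: "tle (h i) (h (Suc i))" if i: "Suc i < length Ch" for i
  proof -
    have "tle (Ch ! i) (Ch ! Suc i)" using Ch i by (simp add: is_chain_def)
    then have "node_vals C (Ch ! i) ! a \<le> node_vals C (Ch ! Suc i) ! a" if "a \<in> set args" for a
      using node_vals_mono[OF gates, of "Ch ! i" "Ch ! Suc i" a] j len i that args_lt by auto
    then show ?thesis unfolding h_def tle_def list_all2_map1 list_all2_map2
      by (auto intro!: list_all2_all_nthI)
  qed
  have h_len: "length (h i) = k" for i
    by (simp add: h_def kw(2))
  obtain D where D: "is_chain k D"
    "card {i. Suc i < length Ch \<and> sys_jump {w} (h i) (h (Suc i))} \<le> dC {w} D"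
    using chain_of_increasing_seq[of "length Ch" h k "{w}", OF h_incr h_len] by blast
  have "(node_vals C (Ch ! i) ! (n + j) \<and> \<not> node_vals C (Ch ! Suc i) ! (n + j))
      = sys_jump {w} (h i) (h (Suc i))" if "Suc i < length Ch" for i
    using gate_h[of i] gate_h[of "Suc i"] h_incr[OF that] that by (auto simp: sys_jump_def is_jump_def)
  then have "card {i. Suc i < length Ch \<and> node_vals C (Ch ! i) ! (n + j) \<and> \<not> node_vals C (Ch ! Suc i) ! (n + j)}
      = card {i. Suc i < length Ch \<and> sys_jump {w} (h i) (h (Suc i))}"
    by (intro arg_cong[where f = card] Collect_cong) blast
  also have "\<dots> \<le> dC {w} D" by (rule D(2))
  also have "\<dots> \<le> dfun k w" unfolding dfun_def by (rule dC_le_dsys[OF D(1)])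
  also have "\<dots> \<le> rB ws" using kw(1) by (rule rB_ge)
  finally show ?thesis .
qed

lemma changes_first_nonmonotone_gate:
  assumes "circuit_over n ws C" "is_chain n Ch" "j < length C"
    "\<forall>j'<j. monotone_gate (C ! j')" "\<not> monotone_gate (C ! j)"
  shows "card {i. Suc i < length Ch \<and> node_vals C (Ch ! i) ! (n + j) \<noteq> node_vals C (Ch ! Suc i) ! (n + j)}
    \<le> 2 * rB ws + 1"
proof -
  define g where "g i = node_vals C (Ch ! i) ! (n + j)" for i
  have "{i. Suc i < length Ch \<and> g i \<noteq> g (Suc i)} = {i. i < length Ch - 1 \<and> g i \<noteq> g (Suc i)}"
    and "{i. Suc i < length Ch \<and> g i \<and> \<not> g (Suc i)} = {i. i < length Ch - 1 \<and> g i \<and> \<not> g (Suc i)}"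
    by auto
  then show ?thesis
    using card_changes_le_falls[of "length Ch - 1" g] falls_first_nonmonotone_gate[OF assms]
    unfolding g_def by simp
qed

text \<open>Away from the steps where gate j changes, it can be replaced by the constant it computes.\<close>
lemma circuit_jumps_subset_const_gates:
  assumes Ch: "is_chain n Ch" and j: "j < length C"
  shows "circuit_jumps n Ch C \<subseteq>
    {i. Suc i < length Ch \<and> node_vals C (Ch ! i) ! (n + j) \<noteq> node_vals C (Ch ! Suc i) ! (n + j)}
    \<union> circuit_jumps n Ch (C[j := const_gate False]) \<union> circuit_jumps n Ch (C[j := const_gate True])"
proof
  fix i assume i: "i \<in> circuit_jumps n Ch C"
  define c where "c = node_vals C (Ch ! i) ! (n + j)"
  show "i \<in> {i. Suc i < length Ch \<and> node_vals C (Ch ! i) ! (n + j) \<noteq> node_vals C (Ch ! Suc i) ! (n + j)}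
    \<union> circuit_jumps n Ch (C[j := const_gate False]) \<union> circuit_jumps n Ch (C[j := const_gate True])"
  proof (cases "node_vals C (Ch ! Suc i) ! (n + j) = c")
    case False
    then show ?thesis using i by (auto simp: circuit_jumps_def c_def)
  next
    case True
    have len: "length (Ch ! i) = n" "length (Ch ! Suc i) = n"
      using i Ch by (auto simp: circuit_jumps_def is_chain_def)
    have "node_vals (C[j := const_gate c]) (Ch ! i) = node_vals C (Ch ! i)"
      and "node_vals (C[j := const_gate c]) (Ch ! Suc i) = node_vals C (Ch ! Suc i)"
      using node_vals_replace_by_value[OF j, of "Ch ! i" c] node_vals_replace_by_value[OF j, of "Ch ! Suc i" c]
        True len unfolding c_def by simp_all
    then have "i \<in> circuit_jumps n Ch (C[j := const_gate c])"
      using i by (simp add: circuit_jumps_def)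
    then show ?thesis by (cases c) auto
  qed
qed

lemma add_mult_pow2_minus_one: "r + r * (2 ^ w - 1) + r * (2 ^ w - 1) = r * (2 ^ Suc w - 1 :: nat)"
proof -
  obtain t where "(2::nat) ^ w = Suc t" using not0_implies_Suc[of "(2::nat) ^ w"] by auto
  then show ?thesis by (simp add: algebra_simps)
qed

lemma card_circuit_jumps:
  assumes "circuit_over n ws C" "is_chain n Ch"
  shows "card (circuit_jumps n Ch C) \<le> (2 * rB ws + 1) * (2 ^ circuit_weight C - 1)"
  using assms(1)
proof (induction "circuit_weight C" arbitrary: C rule: less_induct)
  case less
  show ?case
  proof (cases "\<forall>j<length C. monotone_gate (C ! j)")
    case True
    then show ?thesis using circuit_jumps_monotone less.prems assms(2) by simp
  next
    case False
    then obtain j where j: "j < length C" "\<not> monotone_gate (C ! j)"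
      and first: "\<forall>j'<j. \<not> (j' < length C \<and> \<not> monotone_gate (C ! j'))"
      using exists_least_iff[of "\<lambda>j. j < length C \<and> \<not> monotone_gate (C ! j)"] by blast
    then have below: "\<forall>j'<j. monotone_gate (C ! j')" by auto
    define r where "r = 2 * rB ws + 1"
    define w where "w = circuit_weight (C[j := const_gate False])"
    have weight: "circuit_weight C = Suc (circuit_weight (C[j := const_gate c]))" for c
      using circuit_weight_update[OF j(1), of "const_gate c"] j(2)
      by (simp add: gate_weight_eq monotone_gate_const_gate)
    have IH: "card (circuit_jumps n Ch (C[j := const_gate c])) \<le> r * (2 ^ w - 1)" for c
    proof -
      have "circuit_weight (C[j := const_gate c]) = w"
        using weight[of c] weight[of False] unfolding w_def by simp
      then show ?thesis
        using less.hyps[of "C[j := const_gate c]"] weight[of c] circuit_over_update_const_gate[OF less.prems]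
        unfolding r_def by simp
    qed
    let ?G = "{i. Suc i < length Ch \<and> node_vals C (Ch ! i) ! (n + j) \<noteq> node_vals C (Ch ! Suc i) ! (n + j)}"
    let ?J0 = "circuit_jumps n Ch (C[j := const_gate False])"
    let ?J1 = "circuit_jumps n Ch (C[j := const_gate True])"
    have "finite ?G" by (rule finite_subset[of _ "{..<length Ch}"]) auto
    then have "card (circuit_jumps n Ch C) \<le> card (?G \<union> ?J0 \<union> ?J1)"
      by (intro card_mono circuit_jumps_subset_const_gates[OF assms(2) j(1)]) (simp add: finite_circuit_jumps)
    also have "\<dots> \<le> card ?G + card ?J0 + card ?J1"
      using card_Un_le[of "?G \<union> ?J0" ?J1] card_Un_le[of ?G ?J0] by linarith
    also have "\<dots> \<le> r + r * (2 ^ w - 1) + r * (2 ^ w - 1)"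
      using changes_first_nonmonotone_gate[OF less.prems assms(2) j(1) below j(2)] IH[of False] IH[of True]
      unfolding r_def by (intro add_mono)
    also have "\<dots> = r * (2 ^ Suc w - 1)"
      by (rule add_mult_pow2_minus_one)
    finally show ?thesis using weight[of False] unfolding r_def w_def by simp
  qed
qed

definition dual_rail :: "nat \<Rightarrow> (bool list \<Rightarrow> bool) \<Rightarrow> bool list \<Rightarrow> bool" where
  "dual_rail n f z \<longleftrightarrow> (\<exists>y. length y = n \<and> f y \<and> tle y (take n z) \<and> tle (map Not y) (drop n z))"

lemma monotone_fn_dual_rail: "monotone_fn m (dual_rail n f)"
  unfolding monotone_fn_def le_bool_def dual_rail_def
proof (intro allI impI, elim exE conjE)
  fix z z' y
  assume "tle z z'" and y: "length y = n" "f y" "tle y (take n z)" "tle (map Not y) (drop n z)"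
  moreover have "tle (take n z) (take n z')" "tle (drop n z) (drop n z')"
    using \<open>tle z z'\<close> unfolding tle_def by auto
  ultimately show "\<exists>y. length y = n \<and> f y \<and> tle y (take n z') \<and> tle (map Not y) (drop n z')"
    using tle_trans by blast
qed

lemma dual_rail_literals:
  assumes "length x = n"
  shows "dual_rail n f (x @ map Not x) = f x"
proof
  assume "dual_rail n f (x @ map Not x)"
  then obtain y where y: "length y = n" "f y" "tle y x" "tle (map Not y) (map Not x)"
    using assms by (auto simp: dual_rail_def)
  then have "tle x y" using assms unfolding tle_def list_all2_conv_all_nth by auto
  then show "f x" using y tle_antisym by blast
next
  assume "f x"
  then show "dual_rail n f (x @ map Not x)"
    using assms unfolding dual_rail_def by (intro exI[of _ x]) (simp add: tle_refl)
qed

lemma nonmonotone_negation: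
  assumes "tle a b" "w a" "\<not> w b"
  shows "w (map (\<lambda>l. if a ! l = b ! l then a ! l else c) [0..<length a]) \<longleftrightarrow> \<not> c"
proof -
  have "map (\<lambda>l. if a ! l = b ! l then a ! l else c) [0..<length a] = (if c then b else a)"
  proof (rule nth_equalityI)
    fix l assume "l < length (map (\<lambda>l. if a ! l = b ! l then a ! l else c) [0..<length a])"
    then have "l < length a" by simp
    then show "map (\<lambda>l. if a ! l = b ! l then a ! l else c) [0..<length a] ! l = (if c then b else a) ! l"
      using tle_nth[OF assms(1)] by (auto simp: le_bool_def)
  qed (use tle_length[OF assms(1)] in simp)
  then show ?thesis using assms by simp
qed

definition negation_args :: "nat \<Rightarrow> bool list \<Rightarrow> bool list \<Rightarrow> nat \<Rightarrow> nat list" where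
  "negation_args n a b i = map (\<lambda>l. if a ! l = b ! l then (if a ! l then n + 1 else n) else i) [0..<length a]"

text \<open>Nodes \<open>n\<close> and \<open>n + 1\<close> hold the constants, node \<open>n + 2 + i\<close> holds \<open>\<not> x\<^sub>i\<close>,
and node \<open>2 * n + 2 + t\<close> holds \<open>fs ! t\<close>.\<close>
definition universal_circuit ::
  "nat \<Rightarrow> (bool list \<Rightarrow> bool) \<Rightarrow> bool list \<Rightarrow> bool list \<Rightarrow> (bool list \<Rightarrow> bool) list \<Rightarrow> gate list" where
  "universal_circuit n w a b fs =
     [const_gate False, const_gate True]
     @ map (\<lambda>i. (w, negation_args n a b i)) [0..<n]
     @ map (\<lambda>f. (dual_rail n f, [0..<n] @ map (\<lambda>i. n + 2 + i) [0..<n])) fs"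

lemma universal_circuit_nth:
  shows "universal_circuit n w a b fs ! 0 = const_gate False"
    and "universal_circuit n w a b fs ! Suc 0 = const_gate True"
    and "i < n \<Longrightarrow> universal_circuit n w a b fs ! (2 + i) = (w, negation_args n a b i)"
    and "t < length fs \<Longrightarrow>
      universal_circuit n w a b fs ! (2 + n + t) = (dual_rail n (fs ! t), [0..<n] @ map (\<lambda>i. n + 2 + i) [0..<n])"
  by (simp_all add: universal_circuit_def nth_append)

lemma length_universal_circuit: "length (universal_circuit n w a b fs) = 2 + n + length fs"
  by (simp add: universal_circuit_def)

lemma circuit_over_universal_circuit:
  assumes "(length a, w) \<in> set ws"
  shows "circuit_over n ws (universal_circuit n w a b fs)"
  unfolding circuit_over_def
proof (intro allI impI)
  fix j assume j: "j < length (universal_circuit n w a b fs)"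
  have "j = 0 \<or> j = 1 \<or> (\<exists>i. i < n \<and> j = 2 + i) \<or> (\<exists>t. t < length fs \<and> j = 2 + n + t)"
    using j unfolding length_universal_circuit by presburger
  then consider "j = 0" | "j = 1" | i where "i < n" "j = 2 + i" | t where "t < length fs" "j = 2 + n + t"
    by blast
  then show "(\<forall>x\<in>set (snd (universal_circuit n w a b fs ! j)). x < n + j)
    \<and> in_basis ws (length (snd (universal_circuit n w a b fs ! j))) (fst (universal_circuit n w a b fs ! j))"
  proof cases
    case (3 i)
    then have "universal_circuit n w a b fs ! j = (w, negation_args n a b i)"
      by (simp only: universal_circuit_nth)
    then show ?thesis using 3 in_basis_listed[OF assms] by (auto simp: negation_args_def)
  next
    case (4 t)
    then have "universal_circuit n w a b fs ! j = (dual_rail n (fs ! t), [0..<n] @ map (\<lambda>i. n + 2 + i) [0..<n])"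
      by (simp only: universal_circuit_nth)
    then show ?thesis using 4 by (auto simp: in_basis_monotone monotone_fn_dual_rail)
  qed (simp_all add: universal_circuit_nth const_gate_def in_basis_monotone monotone_fn_const)
qed

lemma node_vals_universal_circuit_gate:
  assumes "length x = n" "j < length (universal_circuit n w a b fs)"
  shows "node_vals (universal_circuit n w a b fs) x ! (n + j)
    = fst (universal_circuit n w a b fs ! j)
        (map (\<lambda>v. node_vals (universal_circuit n w a b fs) x ! v) (snd (universal_circuit n w a b fs ! j)))"
  \<comment> \<open>the argument bounds are part of \<open>circuit_over\<close>, here for the basis listing only \<open>w\<close>\<close>
  using circuit_over_universal_circuit[of a w "[(length a, w)]" n b fs] node_vals_gate[of j _ x] assms
  unfolding circuit_over_def by simp

lemma node_vals_universal_circuit_negation: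
  assumes x: "length x = n" and ab: "tle a b" "w a" "\<not> w b" and i: "i < n"
  shows "node_vals (universal_circuit n w a b fs) x ! (n + (2 + i)) = (\<not> x ! i)"
proof -
  let ?C = "universal_circuit n w a b fs"
  let ?V = "node_vals ?C x"
  note gate = node_vals_universal_circuit_gate[OF x]
  have false_node: "?V ! n = False"
    using gate[of 0, unfolded universal_circuit_nth(1)]
    by (simp add: length_universal_circuit const_gate_def)
  have true_node: "?V ! Suc n = True"
    using gate[of "Suc 0", unfolded universal_circuit_nth(2)]
    by (simp add: length_universal_circuit const_gate_def)
  have "?V ! (n + (2 + i)) = w (map (\<lambda>v. ?V ! v) (negation_args n a b i))"
    using gate[of "2 + i", unfolded universal_circuit_nth(3)[OF i]] i
    by (simp add: length_universal_circuit)
  also have "map (\<lambda>v. ?V ! v) (negation_args n a b i)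
      = map (\<lambda>l. if a ! l = b ! l then a ! l else x ! i) [0..<length a]"
    using x i by (auto simp: negation_args_def false_node true_node node_vals_input)
  finally show ?thesis using nonmonotone_negation[OF ab] by simp
qed

lemma node_vals_universal_circuit:
  assumes x: "length x = n" and ab: "tle a b" "w a" "\<not> w b" and t: "t < length fs"
  shows "node_vals (universal_circuit n w a b fs) x ! (2 * n + 2 + t) = (fs ! t) x"
proof -
  let ?C = "universal_circuit n w a b fs"
  let ?V = "node_vals ?C x"
  have literals: "map (\<lambda>v. ?V ! v) ([0..<n] @ map (\<lambda>i. n + 2 + i) [0..<n]) = x @ map Not x"
  proof -
    have "map (\<lambda>v. ?V ! v) [0..<n] = x"
      by (rule nth_equalityI) (simp_all add: x node_vals_input)
    moreover have "map (\<lambda>v. ?V ! v) (map (\<lambda>i. n + 2 + i) [0..<n]) = map Not x"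
      by (rule nth_equalityI)
        (simp_all add: x node_vals_universal_circuit_negation[OF x ab, simplified])
    ultimately show ?thesis by simp
  qed
  have "?V ! (n + (2 + n + t)) = dual_rail n (fs ! t) (map (\<lambda>v. ?V ! v) ([0..<n] @ map (\<lambda>i. n + 2 + i) [0..<n]))"
    using node_vals_universal_circuit_gate[OF x, where j = "2 + n + t" and w = w and a = a and b = b and fs = fs] t
    unfolding universal_circuit_nth(4)[OF t] fst_conv snd_conv
    by (simp only: length_universal_circuit add_less_cancel_left)
  moreover have "2 * n + 2 + t = n + (2 + n + t)" by simp
  ultimately show ?thesis unfolding literals dual_rail_literals[OF x] by (simp only:)
qed

lemma exists_circuit_realizing:
  assumes "(k, w) \<in> set ws" "\<not> monotone_fn k w" "finite F"
  shows "\<exists>C. circuit_over n ws C \<and> realizes n C F"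
proof -
  obtain a b where ab: "length a = k" "tle a b" "w a" "\<not> w b"
    using assms(2) unfolding monotone_fn_def le_bool_def by blast
  obtain fs where fs: "set fs = F"
    using finite_list[OF assms(3)] by blast
  let ?C = "universal_circuit n w a b fs"
  have "realizes n ?C F"
    unfolding realizes_def
  proof
    fix f assume "f \<in> F"
    then obtain t where t: "t < length fs" "f = fs ! t"
      using fs by (metis in_set_conv_nth)
    then show "\<exists>v<n + length ?C. \<forall>x. length x = n \<longrightarrow> node_vals ?C x ! v = f x"
      using node_vals_universal_circuit[OF _ ab(2-4) t(1)]
      by (intro exI[of _ "2 * n + 2 + t"]) (auto simp: length_universal_circuit)
  qed
  then show ?thesis
    using circuit_over_universal_circuit[of a w ws n b fs] assms(1) ab(1) by blast
qed

lemma I_B_attained: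
  assumes "\<exists>C. circuit_over n ws C \<and> realizes n C F"
  obtains C where "circuit_over n ws C" "realizes n C F" "circuit_weight C = I_B n ws F"
proof -
  from assms have "\<exists>w C. circuit_over n ws C \<and> realizes n C F \<and> circuit_weight C = w"
    by blast
  from LeastI_ex[OF this] show ?thesis
    using that unfolding I_B_def by blast
qed

lemma dC_le_card_circuit_jumps:
  assumes "realizes n C F" "is_chain n Ch"
  shows "dC F Ch \<le> card (circuit_jumps n Ch C)"
  unfolding dC_def
proof (intro card_mono[OF finite_circuit_jumps] subsetI)
  fix i assume "i \<in> {i. Suc i < length Ch \<and> sys_jump F (Ch ! i) (Ch ! Suc i)}"
  then obtain f where f: "f \<in> F" "f (Ch ! i)" "\<not> f (Ch ! Suc i)" "Suc i < length Ch"
    unfolding sys_jump_def is_jump_def by auto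
  obtain v where "v < n + length C" "\<forall>x. length x = n \<longrightarrow> node_vals C x ! v = f x"
    using assms(1) f(1) unfolding realizes_def by blast
  moreover have "length (Ch ! i) = n" "length (Ch ! Suc i) = n"
    using assms(2) f(4) by (auto simp: is_chain_def)
  ultimately show "i \<in> circuit_jumps n Ch C"
    unfolding circuit_jumps_def using f by auto
qed

theorem lemma1:
  fixes ws :: "(nat \<times> (bool list \<Rightarrow> bool)) list"
    and n :: nat
    and F :: "(bool list \<Rightarrow> bool) set"
  assumes "length ws \<ge> 1"
    and "\<forall>(k, w)\<in>set ws. \<not> monotone_fn k w"
    and "finite F"
  shows "dsys n F \<le> (2 * rB ws + 1) * (2 ^ I_B n ws F - 1)"
proof -
  obtain k w where kw: "(k, w) \<in> set ws"
    using assms(1) by (cases ws) auto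
  then have "\<exists>C. circuit_over n ws C \<and> realizes n C F"
    using assms(2,3) by (intro exists_circuit_realizing) auto
  then obtain C where C: "circuit_over n ws C" "realizes n C F" "circuit_weight C = I_B n ws F"
    by (rule I_B_attained)
  show ?thesis
  proof (rule dsys_le)
    fix Ch assume Ch: "is_chain n Ch"
    have "dC F Ch \<le> card (circuit_jumps n Ch C)"
      using C(2) Ch by (rule dC_le_card_circuit_jumps)
    also have "\<dots> \<le> (2 * rB ws + 1) * (2 ^ circuit_weight C - 1)"
      using C(1) Ch by (rule card_circuit_jumps)
    finally show "dC F Ch \<le> (2 * rB ws + 1) * (2 ^ I_B n ws F - 1)"
      unfolding C(3) .
  qed
qed

end
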